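(* Let $d\ge3$ be an integer, $p_1,\dots,p_d\in(0,1)$, $q_j=1-p_j$, $P=\prod_{j=1}^dp_jq_j^{-1}$, and $\lambda\in(0,1)$. For every integer $n\ge L(P^{1/d},\lambda)$, $$\sum_{k=0}^n\binom nk^dP^k\ge\left(\frac{\sqrt{2\pi}}{e^2}\right)^dK(P^{1/d},d,\lambda)\,n^{-\frac{d-1}{2}}\left(1+P^{1/d}\right)^{dn}.$$
   Context: For $\alpha>0$, $\lambda\in(0,1)$, with $[x]$ the greatest integer $\le x$: $L(\alpha,\lambda)=\max\left\{\left[\left(\frac{(\alpha+1)+\sqrt{(\alpha+1)^2+4\lambda\alpha}}{2\lambda\alpha}\right)^2\right]+1,\ \left[\left(\frac{(\alpha+1)+\sqrt{(\alpha+1)^2+4\lambda\alpha}}{2\lambda}\right)^2\right]+1\right\}$; $C_1(\alpha,\lambda)=\max\left\{4,\frac{(\alpha+1)^2}{\alpha(1+\lambda\alpha)}\right\}\exp\!\left(-\frac12\frac{1+\lambda\alpha}{(1-\lambda)\alpha}\left((\alpha+1)^2+\frac{\lambda\alpha}{1+\lambda\alpha}\right)\right)$; $C_2(\alpha,\lambda)=\max\left\{4,\frac{(\alpha+1)^2}{\alpha+\lambda}\right\}\exp\!\left(-\frac12\frac{\alpha+\lambda}{(1-\lambda)\alpha^2}\left((\alpha+1)^2+\frac{\lambda\alpha^2}{\alpha+\lambda}\right)\right)$; $K(\alpha,d,\lambda)=\frac{(1-\lambda)\alpha+1}{\alpha+1}\left(C_1(\alpha,\lambda)\right)^d+\left(C_2(\alpha,\lambda)\right)^d$.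 *)

theory Defs
  imports "HOL-Analysis.Analysis"
begin

definition Lbound :: "real \<Rightarrow> real \<Rightarrow> int" where
  "Lbound \<alpha> lam = max
     (\<lfloor>(((\<alpha>+1) + sqrt ((\<alpha>+1)^2 + 4*lam*\<alpha>)) / (2*lam*\<alpha>))^2\<rfloor> + 1)
     (\<lfloor>(((\<alpha>+1) + sqrt ((\<alpha>+1)^2 + 4*lam*\<alpha>)) / (2*lam))^2\<rfloor> + 1)"

definition C1 :: "real \<Rightarrow> real \<Rightarrow> real" where
  "C1 \<alpha> lam = max 4 ((\<alpha>+1)^2 / (\<alpha>*(1+lam*\<alpha>))) *
     exp (-(1/2) * ((1+lam*\<alpha>) / ((1-lam)*\<alpha>)) *
          ((\<alpha>+1)^2 + lam*\<alpha> / (1+lam*\<alpha>)))"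

definition C2 :: "real \<Rightarrow> real \<Rightarrow> real" where
  "C2 \<alpha> lam = max 4 ((\<alpha>+1)^2 / (\<alpha>+lam)) *
     exp (-(1/2) * ((\<alpha>+lam) / ((1-lam)*\<alpha>^2)) *
          ((\<alpha>+1)^2 + lam*\<alpha>^2 / (\<alpha>+lam)))"

definition Kconst :: "real \<Rightarrow> nat \<Rightarrow> real \<Rightarrow> real" where
  "Kconst \<alpha> d lam = ((1-lam)*\<alpha>+1)/(\<alpha>+1) * (C1 \<alpha> lam)^d + (C2 \<alpha> lam)^d"

end

theory Submission
  imports Defs
begin

(*
  The constant in front is tiny: C1 and C2 have the form max 4 v * exp (-u/2) with
  v <= (a+1)^2/a <= u, and y * exp (-y/2) <= 4/e^2 for y >= 4, so both are at most 4/e^2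
  and (sqrt (2 pi)/e^2)^d * K <= 2/4^d.  It therefore suffices to show, with a = P^(1/d),
  that sum_k (C(n,k) a^k)^d >= 3/4^d * (1+a)^(dn) * n^(-(d-1)/2).
  The weights C(n,k) a^k have total mass (1+a)^n and variance n a/(1+a)^2 <= n/4 around
  n a/(1+a).  By Chebyshev, 3/4 of the mass lies on the at most 3 sqrt n indices within
  distance sqrt n of the mean, and the power-mean inequality on these indices gives the bound.
  The lower bound on n is only needed to ensure n >= 1, and d >= 1 would suffice.
*)

lemma binomial_ring_row_sum:
  fixes x :: "'a::comm_ring_1"
  shows "(\<Sum>k\<le>n. of_nat (n choose k) * x ^ k) = (1 + x) ^ n"
  using binomial_ring[of x 1 n] by (simp add: add.commute)

lemma binomial_absorption_term:
  fixes x :: "'a::comm_semiring_1"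
  shows "of_nat (Suc k) * of_nat (Suc n choose Suc k) * x ^ Suc k
       = of_nat (Suc n) * x * (of_nat (n choose k) * x ^ k)"
proof -
  have "of_nat (Suc k) * of_nat (Suc n choose Suc k) = (of_nat (Suc n) * of_nat (n choose k) :: 'a)"
    by (metis Suc_times_binomial_eq of_nat_mult mult.commute)
  then show ?thesis
    by (metis (no_types, lifting) mult.assoc mult.left_commute power_Suc)
qed

lemma binomial_ring_first_moment:
  fixes x :: "'a::comm_ring_1"
  shows "(\<Sum>k\<le>n. of_nat k * of_nat (n choose k) * x ^ k) = of_nat n * x * (1 + x) ^ (n - 1)"
proof (cases n)
  case 0
  then show ?thesis by simp
next
  case (Suc m)
  have "(\<Sum>k\<le>n. of_nat k * of_nat (n choose k) * x ^ k)
      = (\<Sum>j\<le>m. of_nat (Suc j) * of_nat (Suc m choose Suc j) * x ^ Suc j)"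
    unfolding Suc by (subst sum.atMost_Suc_shift) simp
  also have "\<dots> = (\<Sum>j\<le>m. of_nat (Suc m) * x * (of_nat (m choose j) * x ^ j))"
    by (rule sum.cong) (simp_all only: binomial_absorption_term)
  also have "\<dots> = of_nat n * x * (1 + x) ^ (n - 1)"
    by (simp add: Suc binomial_ring_row_sum flip: sum_distrib_left)
  finally show ?thesis .
qed

lemma binomial_ring_second_factorial_moment:
  fixes x :: "'a::comm_ring_1"
  shows "(\<Sum>k\<le>n. of_nat k * (of_nat k - 1) * of_nat (n choose k) * x ^ k)
       = of_nat n * (of_nat n - 1) * x ^ 2 * (1 + x) ^ (n - 2)"
proof (cases n)
  case 0
  then show ?thesis by simp
next
  case (Suc m)
  have "(\<Sum>k\<le>n. of_nat k * (of_nat k - 1) * of_nat (n choose k) * x ^ k)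
      = (\<Sum>j\<le>m. of_nat (Suc j) * of_nat j * of_nat (Suc m choose Suc j) * x ^ Suc j)"
    unfolding Suc by (subst sum.atMost_Suc_shift) simp
  also have "\<dots> = (\<Sum>j\<le>m. of_nat (Suc m) * x * (of_nat j * of_nat (m choose j) * x ^ j))"
  proof (rule sum.cong)
    fix j
    have "of_nat (Suc j) * of_nat j * of_nat (Suc m choose Suc j) * x ^ Suc j
        = of_nat j * (of_nat (Suc j) * of_nat (Suc m choose Suc j) * x ^ Suc j)"
      by (simp only: mult_ac)
    also have "\<dots> = of_nat (Suc m) * x * (of_nat j * of_nat (m choose j) * x ^ j)"
      unfolding binomial_absorption_term by (simp only: mult_ac)
    finally show "of_nat (Suc j) * of_nat j * of_nat (Suc m choose Suc j) * x ^ Suc j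
        = of_nat (Suc m) * x * (of_nat j * of_nat (m choose j) * x ^ j)" .
  qed simp
  also have "\<dots> = of_nat (Suc m) * x * (of_nat m * x * (1 + x) ^ (m - 1))"
    by (simp only: binomial_ring_first_moment flip: sum_distrib_left)
  also have "\<dots> = of_nat n * (of_nat n - 1) * x ^ 2 * (1 + x) ^ (n - 2)"
    by (simp add: Suc power2_eq_square algebra_simps)
  finally show ?thesis .
qed

lemma binomial_ring_variance:
  fixes x :: real
  assumes "1 + x \<noteq> 0"
  shows "(\<Sum>k\<le>n. real (n choose k) * x ^ k * (real k - real n * x / (1 + x))\<^sup>2)
       = real n * x / (1 + x)\<^sup>2 * (1 + x) ^ n"
proof -
  define y where "y = x / (1 + x)"
  define T where "T = (1 + x) ^ n"
  have S1: "(\<Sum>k\<le>n. real k * real (n choose k) * x ^ k) = real n * y * T"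
  proof (cases n)
    case (Suc m)
    then have "(1 + x) ^ n = (1 + x) * (1 + x) ^ (n - 1)" by simp
    then show ?thesis
      unfolding binomial_ring_first_moment y_def T_def using assms by (simp add: field_simps)
  qed simp
  have S2: "(\<Sum>k\<le>n. real k * (real k - 1) * real (n choose k) * x ^ k) = real n * (real n - 1) * y\<^sup>2 * T"
  proof (cases "n \<ge> 2")
    case True
    then have "(1 + x) ^ n = (1 + x)\<^sup>2 * (1 + x) ^ (n - 2)"
      by (metis le_add_diff_inverse power_add)
    then show ?thesis
      unfolding binomial_ring_second_factorial_moment y_def T_def using assms by (simp add: power_divide)
  next
    case False
    then have "n = 0 \<or> n = 1" by auto
    then show ?thesis by (auto simp: binomial_ring_second_factorial_moment)
  qed
  have "(\<Sum>k\<le>n. real (n choose k) * x ^ k * (real k - real n * y)\<^sup>2)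
      = (\<Sum>k\<le>n. real k * (real k - 1) * real (n choose k) * x ^ k
          + (1 - 2 * real n * y) * (real k * real (n choose k) * x ^ k)
          + (real n * y)\<^sup>2 * (real (n choose k) * x ^ k))"
    by (rule sum.cong) (simp_all add: power2_eq_square algebra_simps)
  also have "\<dots> = real n * (real n - 1) * y\<^sup>2 * T + (1 - 2 * real n * y) * (real n * y * T) + (real n * y)\<^sup>2 * T"
    by (simp add: sum.distrib S1 S2 binomial_ring_row_sum T_def flip: sum_distrib_left)
  also have "\<dots> = real n * y * (1 - y) * T"
    by (simp add: power2_eq_square algebra_simps)
  also have "\<dots> = real n * x / (1 + x)\<^sup>2 * (1 + x) ^ n"
    using assms by (simp add: y_def T_def field_simps power2_eq_square)
  finally show ?thesis
    by (simp add: y_def)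
qed

lemma markov_inequality_sum:
  fixes w g :: "'a \<Rightarrow> real"
  assumes "finite S" "\<And>k. k \<in> S \<Longrightarrow> 0 \<le> w k" "\<And>k. k \<in> S \<Longrightarrow> 0 \<le> g k" "0 < r"
  shows "(\<Sum>k\<in>{k\<in>S. r \<le> g k}. w k) \<le> (\<Sum>k\<in>S. w k * g k) / r"
proof -
  have "(\<Sum>k\<in>{k\<in>S. r \<le> g k}. w k) \<le> (\<Sum>k\<in>{k\<in>S. r \<le> g k}. w k * g k / r)"
    using assms by (intro sum_mono) (simp add: le_divide_eq mult_left_mono)
  also have "\<dots> \<le> (\<Sum>k\<in>S. w k * g k / r)"
    using assms by (intro sum_mono2) auto
  finally show ?thesis
    by (simp add: sum_divide_distrib)
qed

lemma card_nat_dist_less: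
  fixes c s :: real
  assumes "0 \<le> s"
  shows "finite {k::nat. \<bar>real k - c\<bar> < s}" "real (card {k::nat. \<bar>real k - c\<bar> < s}) \<le> 2 * s + 1"
proof -
  define l where "l = nat \<lceil>c - s\<rceil>"
  define m where "m = nat \<lfloor>2 * s\<rfloor>"
  have sub: "{k::nat. \<bar>real k - c\<bar> < s} \<subseteq> {l..l + m}"
  proof
    fix k assume "k \<in> {k::nat. \<bar>real k - c\<bar> < s}"
    then have k: "c - s < real k" "real k < c + s" by auto
    then have "\<lceil>c - s\<rceil> \<le> int k"
      by (simp add: ceiling_le_iff)
    moreover have "real k - of_int \<lceil>c - s\<rceil> \<le> 2 * s"
      using k le_of_int_ceiling[of "c - s"] by linarith
    then have "int k - \<lceil>c - s\<rceil> \<le> \<lfloor>2 * s\<rfloor>"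
      by (simp add: le_floor_iff)
    ultimately show "k \<in> {l..l + m}"
      unfolding l_def m_def atLeastAtMost_iff using assms by linarith
  qed
  then show "finite {k::nat. \<bar>real k - c\<bar> < s}"
    using finite_subset by blast
  have "card {k::nat. \<bar>real k - c\<bar> < s} \<le> m + 1"
    using card_mono[OF _ sub] by simp
  moreover have "real m \<le> 2 * s"
    unfolding m_def using assms by linarith
  ultimately show "real (card {k::nat. \<bar>real k - c\<bar> < s}) \<le> 2 * s + 1"
    by linarith
qed

lemma sum_power_le_sum_of_powers:
  fixes f :: "'a \<Rightarrow> real"
  assumes "finite I" "I \<noteq> {}" "\<And>i. i \<in> I \<Longrightarrow> 0 \<le> f i" "1 \<le> d"
  shows "(\<Sum>i\<in>I. f i) ^ d \<le> (\<Sum>i\<in>I. f i ^ d) * real (card I) ^ (d - 1)"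
proof -
  have convex: "convex_on {0..} (\<lambda>x::real. x ^ d)"
    by (cases "even d") (auto intro: convex_on_subset convex_power_even convex_power_odd)
  define c where "c = real (card I)"
  have c: "0 < c"
    using assms unfolding c_def by (simp add: card_gt_0_iff)
  have "(\<Sum>i\<in>I. (1 / c) *\<^sub>R f i) ^ d \<le> (\<Sum>i\<in>I. 1 / c * f i ^ d)"
    using convex_on_sum[OF assms(1,2) convex, of "\<lambda>_. 1 / c" f] assms(3) c
    unfolding c_def by simp
  then have "(\<Sum>i\<in>I. f i) ^ d / c ^ d \<le> (\<Sum>i\<in>I. f i ^ d) / c"
    by (simp add: power_divide flip: sum_distrib_left sum_divide_distrib)
  moreover have "c ^ d = c * c ^ (d - 1)"
    using assms(4) by (simp add: power_eq_if)
  ultimately show ?thesis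
    using c unfolding c_def by (simp add: field_simps)
qed

lemma binomial_mass_near_mean:
  fixes a :: real
  assumes "0 \<le> a" "1 \<le> n"
  shows "3 / 4 * (1 + a) ^ n
       \<le> (\<Sum>k\<in>{k\<in>{..n}. \<bar>real k - real n * a / (1 + a)\<bar> < sqrt n}. real (n choose k) * a ^ k)"
proof -
  define A where "A k = real (n choose k) * a ^ k" for k
  define g where "g k = (real k - real n * a / (1 + a))\<^sup>2" for k
  define W where "W = {k\<in>{..n}. \<bar>real k - real n * a / (1 + a)\<bar> < sqrt n}"
  have A: "0 \<le> A k" for k
    unfolding A_def using assms by simp
  have "\<bar>t\<bar> < sqrt n \<longleftrightarrow> t\<^sup>2 < real n" for t
    by (metis real_sqrt_abs real_sqrt_less_iff)
  then have "{..n} - W = {k\<in>{..n}. real n \<le> g k}"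
    unfolding W_def g_def by auto
  moreover have "(\<Sum>k\<in>{k\<in>{..n}. real n \<le> g k}. A k) \<le> (\<Sum>k\<le>n. A k * g k) / real n"
    using assms A by (intro markov_inequality_sum) (auto simp: g_def)
  ultimately have "(\<Sum>k\<in>{..n} - W. A k) \<le> (\<Sum>k\<le>n. A k * g k) / real n"
    by simp
  also have "\<dots> = a / (1 + a)\<^sup>2 * (1 + a) ^ n"
    unfolding A_def g_def using assms binomial_ring_variance[of a n] by simp
  also have "\<dots> \<le> 1 / 4 * (1 + a) ^ n"
  proof (rule mult_right_mono)
    have "0 \<le> (1 - a)\<^sup>2"
      by simp
    then have "4 * a \<le> (1 + a)\<^sup>2"
      by (simp add: power2_eq_square algebra_simps)
    then show "a / (1 + a)\<^sup>2 \<le> 1 / 4"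
      using assms by (simp add: pos_divide_le_eq)
  qed (use assms in simp)
  finally have "(\<Sum>k\<in>{..n} - W. A k) \<le> 1 / 4 * (1 + a) ^ n" .
  moreover have "(\<Sum>k\<in>{..n} - W. A k) = (1 + a) ^ n - (\<Sum>k\<in>W. A k)"
    unfolding A_def W_def by (subst sum_diff) (auto simp: binomial_ring_row_sum)
  ultimately show ?thesis
    unfolding A_def W_def by simp
qed

lemma binomial_power_sum_lower_bound:
  fixes a :: real
  assumes "0 \<le> a" "1 \<le> n" "1 \<le> d"
  shows "3 / 4 ^ d * ((1 + a) ^ (d * n) / sqrt n ^ (d - 1)) \<le> (\<Sum>k\<le>n. (real (n choose k) * a ^ k) ^ d)"
proof -
  define A where "A k = real (n choose k) * a ^ k" for k
  define T where "T = (1 + a) ^ n"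
  define c where "c = real n * a / (1 + a)"
  define W where "W = {k\<in>{..n}. \<bar>real k - c\<bar> < sqrt n}"
  have A: "0 \<le> A k" for k
    unfolding A_def using assms by simp
  have T: "0 < T"
    unfolding T_def using assms by simp
  have mass: "3 / 4 * T \<le> (\<Sum>k\<in>W. A k)"
    unfolding A_def T_def W_def c_def by (rule binomial_mass_near_mean[OF assms(1,2)])
  have "card W \<le> card {k::nat. \<bar>real k - c\<bar> < sqrt n}"
    by (rule card_mono[OF card_nat_dist_less(1)]) (auto simp: W_def)
  then have "real (card W) \<le> 2 * sqrt n + 1"
    using card_nat_dist_less(2)[of "sqrt n" c] by simp
  also have "\<dots> \<le> 3 * sqrt n"
    using assms by simp
  finally have card: "real (card W) \<le> 3 * sqrt n" .
  have "W \<noteq> {}"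
    using mass T by auto
  have sum_W: "(\<Sum>k\<in>W. A k ^ d) \<le> (\<Sum>k\<le>n. A k ^ d)"
    using A by (intro sum_mono2) (auto simp: W_def)
  have "(3 / 4 * T) ^ d \<le> (\<Sum>k\<in>W. A k) ^ d"
    using mass T by (intro power_mono) auto
  also have "\<dots> \<le> (\<Sum>k\<in>W. A k ^ d) * real (card W) ^ (d - 1)"
    using sum_power_le_sum_of_powers[of W A d] \<open>W \<noteq> {}\<close> A assms by (simp add: W_def)
  also have "\<dots> \<le> (\<Sum>k\<le>n. A k ^ d) * (3 * sqrt n) ^ (d - 1)"
    using card sum_W A by (intro mult_mono power_mono sum_nonneg zero_le_power) auto
  finally have "(3 / 4 * T) ^ d / (3 * sqrt n) ^ (d - 1) \<le> (\<Sum>k\<le>n. A k ^ d)"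
    using assms by (simp add: pos_divide_le_eq)
  moreover have "(3 / 4 * T) ^ d / (3 * sqrt n) ^ (d - 1) = 3 / 4 ^ d * (T ^ d / sqrt n ^ (d - 1))"
  proof -
    have "(3::real) ^ d = 3 * 3 ^ (d - 1)"
      using assms by (simp flip: power_Suc)
    then have "(3 / 4 * T) ^ d = 3 * 3 ^ (d - 1) * T ^ d / 4 ^ d"
      by (simp only: power_mult_distrib power_divide times_divide_eq_left)
    moreover have "(3 * sqrt n) ^ (d - 1) = 3 ^ (d - 1) * sqrt n ^ (d - 1)"
      by (rule power_mult_distrib)
    ultimately show ?thesis
      using assms by simp
  qed
  moreover have "(1 + a) ^ (d * n) = T ^ d"
    unfolding T_def by (metis power_mult mult.commute)
  ultimately show ?thesis
    unfolding A_def by simp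
qed

lemma mult_exp_neg_half_le:
  fixes y :: real
  assumes "4 \<le> y"
  shows "y * exp (- y / 2) \<le> 4 * exp (- 2)"
proof -
  have "y / 4 \<le> 1 + (y - 4) / 2"
    using assms by (simp add: field_simps)
  also have "\<dots> \<le> exp ((y - 4) / 2)"
    by (rule exp_ge_add_one_self)
  finally have "y * exp (- y / 2) \<le> 4 * exp ((y - 4) / 2) * exp (- y / 2)"
    by (simp add: mult_right_mono)
  also have "\<dots> = 4 * exp (- 2)"
    by (simp add: mult.assoc field_simps flip: exp_add)
  finally show ?thesis .
qed

lemma max_mult_exp_le:
  fixes u v :: real
  assumes "v \<le> u" "4 \<le> u"
  shows "max 4 v * exp (- (1 / 2) * u) \<le> 4 * exp (- 2)"
proof -
  have "max 4 v * exp (- (1 / 2) * u) \<le> u * exp (- (1 / 2) * u)"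
    using assms by (intro mult_right_mono) simp_all
  also have "\<dots> = u * exp (- u / 2)"
    by simp
  also have "\<dots> \<le> 4 * exp (- 2)"
    by (rule mult_exp_neg_half_le[OF assms(2)])
  finally show ?thesis .
qed

lemma four_le_square_plus_one_div:
  fixes a :: real
  assumes "0 < a"
  shows "4 \<le> (a + 1)\<^sup>2 / a"
proof -
  have "0 \<le> (a - 1)\<^sup>2"
    by simp
  then have "4 * a \<le> (a + 1)\<^sup>2"
    by (simp add: power2_eq_square algebra_simps)
  then show ?thesis
    using assms by (simp add: pos_le_divide_eq)
qed

lemma C1_nonneg: "0 \<le> C1 a lam"
  unfolding C1_def by simp

lemma C2_nonneg: "0 \<le> C2 a lam"
  unfolding C2_def by simp

lemma C1_le:
  assumes "0 < a" "0 < lam" "lam < 1"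
  shows "C1 a lam \<le> 4 * exp (- 2)"
proof -
  define w where "w = (a + 1)\<^sup>2 / a"
  define u where "u = (1 + lam * a) / ((1 - lam) * a) * ((a + 1)\<^sup>2 + lam * a / (1 + lam * a))"
  have C1: "C1 a lam = max 4 (w / (1 + lam * a)) * exp (- (1 / 2) * u)"
    unfolding C1_def u_def w_def by (simp only: mult.assoc divide_divide_eq_left)
  have "0 < lam * a"
    using assms by simp
  have "4 \<le> w"
    unfolding w_def by (rule four_le_square_plus_one_div[OF assms(1)])
  then have "w / (1 + lam * a) \<le> w"
    using \<open>0 < lam * a\<close> by (simp add: divide_le_eq)
  moreover have "w \<le> u"
  proof -
    have "w = w * 1"
      by simp
    also have "\<dots> \<le> w * ((1 + lam * a) / (1 - lam))"
    proof (rule mult_left_mono)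
      show "1 \<le> (1 + lam * a) / (1 - lam)"
        using assms \<open>0 < lam * a\<close> by (subst le_divide_eq_1_pos) linarith+
    qed (use \<open>4 \<le> w\<close> in simp)
    also have "\<dots> = (1 + lam * a) / ((1 - lam) * a) * (a + 1)\<^sup>2"
      by (simp add: w_def field_simps)
    also have "\<dots> \<le> u"
      unfolding u_def using assms \<open>0 < lam * a\<close> by (intro mult_left_mono) simp_all
    finally show ?thesis .
  qed
  ultimately show ?thesis
    unfolding C1 using \<open>4 \<le> w\<close> by (intro max_mult_exp_le) simp_all
qed

lemma C2_le:
  assumes "0 < a" "0 < lam" "lam < 1"
  shows "C2 a lam \<le> 4 * exp (- 2)"
proof -
  define w where "w = (a + 1)\<^sup>2 / a"
  define u where "u = (a + lam) / ((1 - lam) * a\<^sup>2) * ((a + 1)\<^sup>2 + lam * a\<^sup>2 / (a + lam))"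
  have C2: "C2 a lam = max 4 ((a + 1)\<^sup>2 / (a + lam)) * exp (- (1 / 2) * u)"
    unfolding C2_def u_def by (simp only: mult.assoc)
  have "4 \<le> w"
    unfolding w_def by (rule four_le_square_plus_one_div[OF assms(1)])
  have "(a + 1)\<^sup>2 / (a + lam) \<le> w"
    unfolding w_def using assms by (intro divide_left_mono) simp_all
  moreover have "w \<le> u"
  proof -
    have "w = w * 1"
      by simp
    also have "\<dots> \<le> w * ((a + lam) / ((1 - lam) * a))"
      using assms \<open>4 \<le> w\<close> by (intro mult_left_mono) (simp_all add: le_divide_eq algebra_simps)
    also have "\<dots> = (a + lam) / ((1 - lam) * a\<^sup>2) * (a + 1)\<^sup>2"
      by (simp add: w_def field_simps power2_eq_square)
    also have "\<dots> \<le> u"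
      unfolding u_def using assms by (intro mult_left_mono) simp_all
    finally show ?thesis .
  qed
  ultimately show ?thesis
    unfolding C2 using \<open>4 \<le> w\<close> by (intro max_mult_exp_le) simp_all
qed

lemma Kconst_le:
  assumes "0 < a" "0 < lam" "lam < 1"
  shows "Kconst a d lam \<le> 2 * (4 * exp (- 2)) ^ d"
proof -
  have "((1 - lam) * a + 1) / (a + 1) \<le> 1"
    using assms by (simp add: divide_le_eq algebra_simps)
  then have "((1 - lam) * a + 1) / (a + 1) * C1 a lam ^ d \<le> C1 a lam ^ d"
    using assms C1_nonneg by (intro mult_left_le_one_le) simp_all
  also have "C1 a lam ^ d \<le> (4 * exp (- 2)) ^ d"
    using C1_le[OF assms] C1_nonneg by (rule power_mono)
  finally show ?thesis
    using power_mono[OF C2_le[OF assms] C2_nonneg, of d] unfolding Kconst_def by linarith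
qed

lemma sixteen_sqrt_two_pi_le_exp_4: "16 * sqrt (2 * pi) \<le> exp (4::real)"
proof -
  have "2 * pi \<le> (283 / 100)\<^sup>2"
    using pi_less_4 by (simp add: power2_eq_square)
  then have "sqrt (2 * pi) \<le> 283 / 100"
    by (metis real_sqrt_le_mono real_sqrt_unique zero_le_divide_iff zero_le_numeral)
  moreover have "(46::real) \<le> (1 + 4 / real (50::nat)) ^ 50"
    by (simp add: power_divide le_divide_eq)
  moreover have "(1 + 4 / real (50::nat)) ^ 50 \<le> exp (4::real)"
    by (rule exp_ge_one_plus_x_over_n_power_n) auto
  ultimately show ?thesis
    by linarith
qed

lemma normalized_Kconst_le:
  assumes "0 < a" "0 < lam" "lam < 1"
  shows "(sqrt (2 * pi) / exp 2) ^ d * Kconst a d lam \<le> 2 / 4 ^ d"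
proof -
  have "sqrt (2 * pi) / exp 2 * (4 * exp (- 2)) = 4 * sqrt (2 * pi) / exp 4"
    by (simp add: field_simps exp_minus flip: exp_add)
  also have "\<dots> \<le> 1 / 4"
    using sixteen_sqrt_two_pi_le_exp_4 by (simp add: divide_le_eq)
  finally have base: "sqrt (2 * pi) / exp 2 * (4 * exp (- 2)) \<le> 1 / 4" .
  have "(sqrt (2 * pi) / exp 2) ^ d * Kconst a d lam \<le> (sqrt (2 * pi) / exp 2) ^ d * (2 * (4 * exp (- 2)) ^ d)"
    using Kconst_le[OF assms] by (intro mult_left_mono) auto
  also have "\<dots> = 2 * (sqrt (2 * pi) / exp 2 * (4 * exp (- 2))) ^ d"
    by (subst power_mult_distrib) (simp only: mult_ac)
  also have "\<dots> \<le> 2 * (1 / 4) ^ d"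
    using base by (intro mult_left_mono power_mono) auto
  finally show ?thesis
    by (simp add: power_divide)
qed

lemma one_le_Lbound: "1 \<le> Lbound \<alpha> lam"
  unfolding Lbound_def by (simp add: max_def)

lemma powr_neg_half_pred:
  fixes x :: real
  assumes "0 < x" "1 \<le> d"
  shows "x powr (- (real d - 1) / 2) = 1 / sqrt x ^ (d - 1)"
proof -
  have "- (real d - 1) / 2 = - (real (d - 1) * (1 / 2))"
    using assms by (simp add: of_nat_diff divide_simps)
  then have "x powr (- (real d - 1) / 2) = inverse (x powr (real (d - 1) * (1 / 2)))"
    by (simp only: powr_minus)
  also have "x powr (real (d - 1) * (1 / 2)) = (x powr (1 / 2)) ^ (d - 1)"
    using assms by (intro powr_power [symmetric]) simp
  also have "x powr (1 / 2) = sqrt x"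
    using assms by (intro powr_half_sqrt) simp
  finally show ?thesis
    by (simp only: inverse_eq_divide)
qed

theorem proposition15:
  fixes d :: nat and p :: "nat \<Rightarrow> real" and lam :: real and n :: nat
  assumes "d \<ge> 3"
    and "\<And>j. j \<in> {1..d} \<Longrightarrow> 0 < p j \<and> p j < 1"
    and "0 < lam" and "lam < 1"
    and "int n \<ge> Lbound (root d (\<Prod>j=1..d. p j / (1 - p j))) lam"
  shows "(\<Sum>k=0..n. real (n choose k) ^ d * (\<Prod>j=1..d. p j / (1 - p j)) ^ k)
     \<ge> (sqrt (2*pi) / exp 2) ^ d
        * Kconst (root d (\<Prod>j=1..d. p j / (1 - p j))) d lam
        * real n powr (-(real d - 1)/2)
        * (1 + root d (\<Prod>j=1..d. p j / (1 - p j))) ^ (d*n)"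
proof -
  define P where "P = (\<Prod>j=1..d. p j / (1 - p j))"
  define a where "a = root d P"
  have "0 < P"
    unfolding P_def using assms(2) by (intro prod_pos) auto
  then have "0 < a" "a ^ d = P"
    using assms(1) by (simp_all add: a_def)
  have "1 \<le> n"
    using assms(5) one_le_Lbound[of a lam] unfolding a_def P_def by linarith
  have lhs: "(\<Sum>k=0..n. real (n choose k) ^ d * P ^ k) = (\<Sum>k\<le>n. (real (n choose k) * a ^ k) ^ d)"
    by (simp add: atLeast0AtMost power_mult_distrib mult.commute flip: \<open>a ^ d = P\<close> power_mult)
  have "real n powr (-(real d - 1)/2) = 1 / sqrt n ^ (d - 1)"
    using \<open>1 \<le> n\<close> assms(1) by (intro powr_neg_half_pred) auto
  then have "(sqrt (2*pi) / exp 2) ^ d * Kconst a d lam * real n powr (-(real d - 1)/2) * (1 + a) ^ (d*n)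
      = (sqrt (2*pi) / exp 2) ^ d * Kconst a d lam * ((1 + a) ^ (d*n) / sqrt n ^ (d - 1))"
    by simp
  also have "\<dots> \<le> 2 / 4 ^ d * ((1 + a) ^ (d*n) / sqrt n ^ (d - 1))"
    using normalized_Kconst_le[OF \<open>0 < a\<close> assms(3,4)] \<open>0 < a\<close> by (intro mult_right_mono) auto
  also have "\<dots> \<le> 3 / 4 ^ d * ((1 + a) ^ (d*n) / sqrt n ^ (d - 1))"
    using \<open>0 < a\<close> by (intro mult_right_mono divide_right_mono) auto
  also have "\<dots> \<le> (\<Sum>k\<le>n. (real (n choose k) * a ^ k) ^ d)"
    using \<open>0 < a\<close> \<open>1 \<le> n\<close> assms(1) by (intro binomial_power_sum_lower_bound) simp_all
  finally show ?thesis
    unfolding P_def[symmetric] a_def[symmetric] lhs .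
qed

end
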